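(* Let $q$ be a prime power, $1\le k<n\le m$, let $g_1,\dots,g_n\in\mathbb{F}_{q^m}$ be linearly independent over $\mathbb{F}_q$, and let $\mathcal{G}$ be the Gabidulin code of dimension $k$ with respect to $g_1,\dots,g_n$. Then for every $f\in\mathcal{L}_q(x,\mathbb{F}_{q^m})$ with $\deg_q(f)=k$, the word $\sigma_f=(f(g_1),\dots,f(g_n))$ is a deep hole of $\mathcal{G}$ in the rank metric, i.e. $d_R(\sigma_f,\mathcal{G})=n-k$, which equals the covering radius of $\mathcal{G}$. Consequently $\mathcal{G}$ has at least $(q^m-1)q^{mk}$ deep holes in the rank metric.
   Context: A $q$-linearized polynomial over $\mathbb{F}_{q^m}$ is a polynomial $L(x)=\sum_{i=0}^{d}a_ix^{q^i}$ with $a_i\in\mathbb{F}_{q^m}$; if $a_d\ne0$, $d$ is its $q$-degree $\deg_q(L)$. $\mathcal{L}_q(x,\mathbb{F}_{q^m})$ is the set of these. Rank weight: for $\mathbf{u}=(u_1,\dots,u_n)\in\mathbb{F}_{q^m}^n$, $w_R(\mathbf{u})=\dim_{\mathbb{F}_q}\langle u_1,\dots,u_n\rangle$ (the rank of the matrix of coordinates of the $u_j$ in an $\mathbb{F}_q$-basis of $\mathbb{F}_{q^m}$); $d_R(\mathbf{u},\mathbf{v})=w_R(\mathbf{u}-\mathbf{v})$, $d_R(\mathbf{u},C)=\min_{\mathbf{c}\in C}d_R(\mathbf{u},\mathbf{c})$. The covering radius of $C$ is $\max_{\mathbf{u}\in\mathbb{F}_{q^m}^n}d_R(\mathbf{u},C)$,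 and a deep hole is a word attaining it. The Gabidulin code of dimension $k$ with respect to $\mathbb{F}_q$-linearly independent $g_1,\dots,g_n$ is $\mathcal{G}=\{(v(g_1),\dots,v(g_n)) : v\in\mathcal{L}_q(x,\mathbb{F}_{q^m}),\ v=0\text{ or }\deg_q(v)<k\}$; its covering radius in the rank metric is known to be $n-k$. *)

theory Defs
  imports "HOL-Algebra.Algebra"
begin

text \<open>q-linearized polynomials over the field R, represented by coefficient lists
  a = [a_0, ..., a_d]; L(x) = sum_i a_i x^(q^i).\<close>

definition linpolys :: "('a, 'b) ring_scheme \<Rightarrow> 'a list set" where
  "linpolys R = {a. set a \<subseteq> carrier R}"

definition lin_eval :: "('a, 'b) ring_scheme \<Rightarrow> nat \<Rightarrow> 'a list \<Rightarrow> 'a \<Rightarrow> 'a" where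
  "lin_eval R q a x = (\<Oplus>\<^bsub>R\<^esub> i \<in> {..<length a}. a ! i \<otimes>\<^bsub>R\<^esub> (x [^]\<^bsub>R\<^esub> (q ^ i)))"

definition lin_is_zero :: "('a, 'b) ring_scheme \<Rightarrow> 'a list \<Rightarrow> bool" where
  "lin_is_zero R a \<longleftrightarrow> (\<forall>i < length a. a ! i = \<zero>\<^bsub>R\<^esub>)"

text \<open>q-degree: largest index of a nonzero coefficient (meaningful for nonzero a).\<close>
definition lin_qdeg :: "('a, 'b) ring_scheme \<Rightarrow> 'a list \<Rightarrow> nat" where
  "lin_qdeg R a = Max {i. i < length a \<and> a ! i \<noteq> \<zero>\<^bsub>R\<^esub>}"

definition words :: "('a, 'b) ring_scheme \<Rightarrow> nat \<Rightarrow> 'a list set" where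
  "words R n = {u. length u = n \<and> set u \<subseteq> carrier R}"

definition gabidulin :: "('a, 'b) ring_scheme \<Rightarrow> nat \<Rightarrow> nat \<Rightarrow> 'a list \<Rightarrow> 'a list set" where
  "gabidulin R q k gs =
     {map (lin_eval R q v) gs | v. v \<in> linpolys R \<and> (lin_is_zero R v \<or> lin_qdeg R v < k)}"

definition rank_weight :: "('a, 'b) ring_scheme \<Rightarrow> 'a set \<Rightarrow> 'a list \<Rightarrow> nat" where
  "rank_weight R K u = ring.dim R K (ring.Span R K u)"

definition rank_dist :: "('a, 'b) ring_scheme \<Rightarrow> 'a set \<Rightarrow> 'a list \<Rightarrow> 'a list \<Rightarrow> nat" where
  "rank_dist R K u v = rank_weight R K (map2 (\<lambda>x y. x \<ominus>\<^bsub>R\<^esub> y) u v)"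

definition dist_to_code :: "('a, 'b) ring_scheme \<Rightarrow> 'a set \<Rightarrow> 'a list \<Rightarrow> 'a list set \<Rightarrow> nat" where
  "dist_to_code R K u C = Min (rank_dist R K u ` C)"

definition covering_radius :: "('a, 'b) ring_scheme \<Rightarrow> 'a set \<Rightarrow> nat \<Rightarrow> 'a list set \<Rightarrow> nat" where
  "covering_radius R K n C = Max ((\<lambda>u. dist_to_code R K u C) ` words R n)"

definition deep_hole :: "('a, 'b) ring_scheme \<Rightarrow> 'a set \<Rightarrow> nat \<Rightarrow> 'a list set \<Rightarrow> 'a list \<Rightarrow> bool" where
  "deep_hole R K n C u \<longleftrightarrow> u \<in> words R n \<and> dist_to_code R K u C = covering_radius R K n C"

end

theory Submission
  imports Defs
begin

text \<open>Evaluation \<open>x \<mapsto> f(x)\<close> of a q-linearized polynomial is \<open>\<bbbF>\<^sub>q\<close>-linear (Frobenius),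
  and a nonzero \<open>f\<close> of q-degree \<open>d\<close> has at most \<open>q\<^sup>d\<close> roots. Hence on the span \<open>V\<close> of
  \<open>g\<^sub>1, \<dots>, g\<^sub>n\<close> its kernel has dimension at most \<open>d\<close>, and rank--nullity gives
  \<open>w\<^sub>R(f(g\<^sub>1), \<dots>, f(g\<^sub>n)) \<ge> n - d\<close>. If \<open>deg\<^sub>q f = k\<close> and \<open>v\<close> is a message polynomial
  (\<open>deg\<^sub>q v < k\<close>) then \<open>f - v\<close> still has q-degree \<open>k\<close>, so \<open>\<sigma>\<^sub>f\<close> is at rank distance
  \<open>\<ge> n - k\<close> from every codeword. Conversely any word agrees on its first \<open>k\<close> coordinates with
  the codeword interpolating it at \<open>g\<^sub>1, \<dots>, g\<^sub>k\<close> (interpolation exists by counting, since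
  evaluation is injective), so every word is within distance \<open>n - k\<close>. The deep holes
  \<open>\<sigma>\<^sub>f\<close> with \<open>f\<close> of q-degree exactly \<open>k < n\<close> are pairwise distinct, which gives
  \<open>(q\<^sup>m - 1) q\<^sup>m\<^sup>k\<close> of them.\<close>

lemma (in cring) binomial_add_pow:
  assumes a: "a \<in> carrier R" and b: "b \<in> carrier R"
  shows "(a \<oplus> b) [^] n = (\<Oplus>k\<in>{..n}. add_pow R (n choose k) (a [^] k \<otimes> b [^] (n - k)))"
proof (induction n)
  case 0
  then show ?case using a b by simp
next
  case (Suc n)
  define T where "T = (\<lambda>k. a [^] k \<otimes> b [^] (Suc n - k))"
  have T: "T k \<in> carrier R" for k using a b by (simp add: T_def)
  have IH: "(a \<oplus> b) [^] n = (\<Oplus>k\<in>{..n}. add_pow R (n choose k) (a [^] k \<otimes> b [^] (n - k)))"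
    by (rule Suc.IH)
  have times_a: "(a \<oplus> b) [^] n \<otimes> a = (\<Oplus>k\<in>{..n}. add_pow R (n choose k) (T (Suc k)))"
    unfolding IH using a b
    by (subst finsum_ldistr) (auto intro!: finsum_cong' simp: T_def add_pow_ldistr add_pow_rdistr m_ac nat_pow_Suc2)
  have times_b: "(a \<oplus> b) [^] n \<otimes> b = (\<Oplus>k\<in>{..n}. add_pow R (n choose k) (T k))"
    unfolding IH using a b
    by (subst finsum_ldistr) (auto intro!: finsum_cong' simp: T_def add_pow_ldistr add_pow_rdistr m_ac Suc_diff_le)
  have shift: "(\<Oplus>k\<in>{..n}. add_pow R (n choose k) (T k))
      = T 0 \<oplus> (\<Oplus>k\<in>{..n}. add_pow R (n choose Suc k) (T (Suc k)))"
  proof -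
    have "(\<Oplus>k\<in>{..Suc n}. add_pow R (n choose k) (T k)) = (\<Oplus>k\<in>{..n}. add_pow R (n choose k) (T k))"
      by (subst finsum_Suc) (auto simp: T finsum_closed binomial_eq_0)
    moreover have "(\<Oplus>k\<in>{..Suc n}. add_pow R (n choose k) (T k))
      = (\<Oplus>k\<in>{..n}. add_pow R (n choose Suc k) (T (Suc k))) \<oplus> T 0"
      by (subst finsum_Suc2) (auto simp: T)
    ultimately show ?thesis by (simp add: a_comm finsum_closed T)
  qed
  have pascal: "(\<Oplus>k\<in>{..n}. add_pow R (n choose k) (T (Suc k))) \<oplus>
      (\<Oplus>k\<in>{..n}. add_pow R (n choose Suc k) (T (Suc k)))
      = (\<Oplus>k\<in>{..n}. add_pow R (Suc n choose Suc k) (T (Suc k)))"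
    by (subst finsum_addf[symmetric]) (auto intro!: finsum_cong' simp: T add.nat_pow_mult)
  have "(a \<oplus> b) [^] Suc n = (a \<oplus> b) [^] n \<otimes> a \<oplus> (a \<oplus> b) [^] n \<otimes> b"
    using a b by (simp add: r_distr)
  also have "\<dots> = T 0 \<oplus> (\<Oplus>k\<in>{..n}. add_pow R (Suc n choose Suc k) (T (Suc k)))"
    unfolding times_a times_b shift pascal[symmetric] by (simp add: a_ac finsum_closed T)
  also have "\<dots> = (\<Oplus>k\<in>{..Suc n}. add_pow R (Suc n choose k) (T k))"
    by (subst finsum_Suc2) (auto simp: T a_comm finsum_closed)
  finally show ?case by (simp add: T_def)
qed

lemma (in ring) add_pow_one_power: "add_pow R ((m::nat) ^ e) \<one> = add_pow R m \<one> [^] (e::nat)"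
proof (induction e)
  case (Suc e)
  have "add_pow R (m ^ Suc e) \<one> = add_pow R (m ^ e) (add_pow R m \<one>)"
    by (metis add.nat_pow_pow mult.commute one_closed power_Suc)
  also have "\<dots> = add_pow R (m ^ e) \<one> \<otimes> add_pow R m \<one>"
    using add_pow_ldistr[of \<one> "add_pow R m \<one>" "m ^ e"] by simp
  finally show ?case using Suc by simp
qed simp

lemma (in cring) frobenius_add:
  assumes p: "Factorial_Ring.prime (p::nat)" and char: "add_pow R p \<one> = \<zero>"
    and a: "a \<in> carrier R" and b: "b \<in> carrier R"
  shows "(a \<oplus> b) [^] p = a [^] p \<oplus> b [^] p"
proof -
  obtain p' where p': "p = Suc (Suc p')"
    using prime_ge_2_nat[OF p] by (metis add_2_eq_Suc le_Suc_ex)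
  define g where "g = (\<lambda>k. add_pow R (p choose k) (a [^] k \<otimes> b [^] (p - k)))"
  have g: "g k \<in> carrier R" for k using a b by (simp add: g_def)
  have inner_vanish: "g (Suc i) = \<zero>" if "i \<le> p'" for i
  proof -
    have "p dvd p choose Suc i"
      using that p' by (intro dvd_choose_prime[OF _ _ _ p]) auto
    then obtain t where t: "p choose Suc i = p * t" ..
    have "g (Suc i) = add_pow R t (add_pow R p \<one> \<otimes> (a [^] Suc i \<otimes> b [^] (p - Suc i)))"
      unfolding g_def t using a b add_pow_ldistr[of \<one>]
      by (simp add: add.nat_pow_pow mult.commute)
    then show ?thesis using char a b by simp
  qed
  have "(a \<oplus> b) [^] p = (\<Oplus>k\<in>{..Suc (Suc p')}. g k)"
    unfolding binomial_add_pow[OF a b] g_def p' ..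
  also have "\<dots> = g p \<oplus> ((\<Oplus>i\<in>{..p'}. g (Suc i)) \<oplus> g 0)"
    using finsum_Suc2[of g "Suc p'"] by (simp add: g p' a_assoc finsum_closed)
  also have "(\<Oplus>i\<in>{..p'}. g (Suc i)) = \<zero>"
    by (rule trans[OF finsum_cong' finsum_zero]) (auto simp: inner_vanish)
  finally show ?thesis using a b by (simp add: g_def)
qed

lemma (in cring) frobenius_add_power:
  assumes p: "Factorial_Ring.prime (p::nat)" and char: "add_pow R p \<one> = \<zero>"
    and a: "a \<in> carrier R" and b: "b \<in> carrier R"
  shows "(a \<oplus> b) [^] (p ^ j) = a [^] (p ^ j) \<oplus> b [^] (p ^ j)"
proof (induction j)
  case (Suc j)
  have "(a \<oplus> b) [^] (p ^ Suc j) = ((a \<oplus> b) [^] (p ^ j)) [^] p"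
    using a b by (simp add: nat_pow_pow mult.commute)
  also have "\<dots> = (a [^] (p ^ j)) [^] p \<oplus> (b [^] (p ^ j)) [^] p"
    using Suc a b by (simp add: frobenius_add[OF p char])
  finally show ?case using a b by (simp add: nat_pow_pow mult.commute)
qed (use a b in simp)

lemma nth_in_subset [simp]: "set a \<subseteq> A \<Longrightarrow> i < length a \<Longrightarrow> a ! i \<in> A"
  by (auto dest: nth_mem)

lemma card_le_card_image_mult:
  assumes "finite V" and "\<And>y. y \<in> \<phi> ` V \<Longrightarrow> card {x \<in> V. \<phi> x = y} \<le> B"
  shows "card V \<le> card (\<phi> ` V) * B"
proof -
  have "card V = card (\<Union>y\<in>\<phi> ` V. {x \<in> V. \<phi> x = y})" by (rule arg_cong[of _ _ card]) auto
  also have "\<dots> \<le> (\<Sum>y\<in>\<phi> ` V. card {x \<in> V. \<phi> x = y})"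
    by (rule card_UN_le) (use assms(1) in simp)
  also have "\<dots> \<le> card (\<phi> ` V) * B" using sum_bounded_above[of "\<phi> ` V" _ B] assms(2) by simp
  finally show ?thesis .
qed

lemma card_lists_length_Suc_last_neq:
  assumes "finite A" and "z \<in> A"
  shows "card {xs. set xs \<subseteq> A \<and> length xs = Suc k \<and> xs ! k \<noteq> z} = (card A - 1) * card A ^ k"
proof -
  let ?L = "{xs. set xs \<subseteq> A \<and> length xs = k}"
  have "{xs. set xs \<subseteq> A \<and> length xs = Suc k \<and> xs ! k \<noteq> z}
        = (\<lambda>(xs, y). xs @ [y]) ` (?L \<times> (A - {z}))"
  proof (intro equalityI subsetI)
    fix xs assume xs: "xs \<in> {xs. set xs \<subseteq> A \<and> length xs = Suc k \<and> xs ! k \<noteq> z}"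
    then have "xs \<noteq> []" by auto
    then have "last xs = xs ! k" using xs by (simp add: last_conv_nth)
    then have "xs = butlast xs @ [xs ! k]" using \<open>xs \<noteq> []\<close> by (metis append_butlast_last_id)
    moreover have "xs ! k \<in> A" using xs by simp
    ultimately show "xs \<in> (\<lambda>(xs, y). xs @ [y]) ` (?L \<times> (A - {z}))"
      using xs by (intro image_eqI[of _ _ "(butlast xs, xs ! k)"]) (auto dest: in_set_butlastD)
  qed (auto simp: nth_append)
  moreover have "inj_on (\<lambda>(xs, y). xs @ [y]) (?L \<times> (A - {z}))" by (rule inj_onI) auto
  ultimately show ?thesis
    using assms card_lists_length_eq[OF assms(1), of k]
    by (simp add: card_image card_cartesian_product card_Diff_singleton mult.commute)
qed

lemma le_lin_qdeg: "i < length a \<Longrightarrow> a ! i \<noteq> \<zero>\<^bsub>R\<^esub> \<Longrightarrow> i \<le> lin_qdeg R a"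
  unfolding lin_qdeg_def by (intro Max_ge) auto

lemma nth_gt_lin_qdeg: "lin_qdeg R a < i \<Longrightarrow> i < length a \<Longrightarrow> a ! i = \<zero>\<^bsub>R\<^esub>"
  using le_lin_qdeg[of i a R] by fastforce

lemma lin_qdeg_in_support:
  assumes "\<not> lin_is_zero R a"
  shows "lin_qdeg R a < length a" and "a ! lin_qdeg R a \<noteq> \<zero>\<^bsub>R\<^esub>"
proof -
  have "{i. i < length a \<and> a ! i \<noteq> \<zero>\<^bsub>R\<^esub>} \<noteq> {}"
    using assms by (auto simp: lin_is_zero_def)
  then have "lin_qdeg R a \<in> {i. i < length a \<and> a ! i \<noteq> \<zero>\<^bsub>R\<^esub>}"
    unfolding lin_qdeg_def by (intro Max_in) auto
  then show "lin_qdeg R a < length a" and "a ! lin_qdeg R a \<noteq> \<zero>\<^bsub>R\<^esub>" by auto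
qed

lemma lin_qdeg_last:
  assumes "length a = Suc k" and "a ! k \<noteq> \<zero>\<^bsub>R\<^esub>"
  shows "\<not> lin_is_zero R a" and "lin_qdeg R a = k"
proof -
  show nz: "\<not> lin_is_zero R a" using assms by (auto simp: lin_is_zero_def)
  show "lin_qdeg R a = k"
    using le_lin_qdeg[of k a R] lin_qdeg_in_support(1)[OF nz] assms by simp
qed

definition lin_coeff :: "('a, 'b) ring_scheme \<Rightarrow> 'a list \<Rightarrow> nat \<Rightarrow> 'a" where
  "lin_coeff R a i = (if i < length a then a ! i else \<zero>\<^bsub>R\<^esub>)"

definition lin_diff :: "('a, 'b) ring_scheme \<Rightarrow> 'a list \<Rightarrow> 'a list \<Rightarrow> 'a list" where
  "lin_diff R a b =
     map (\<lambda>i. lin_coeff R a i \<ominus>\<^bsub>R\<^esub> lin_coeff R b i) [0..<max (length a) (length b)]"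

lemma length_lin_diff [simp]: "length (lin_diff R a b) = max (length a) (length b)"
  by (simp add: lin_diff_def)

lemma nth_lin_diff [simp]:
  "i < max (length a) (length b) \<Longrightarrow> lin_diff R a b ! i = lin_coeff R a i \<ominus>\<^bsub>R\<^esub> lin_coeff R b i"
  by (simp add: lin_diff_def)

context ring
begin

lemma lin_coeff_closed: "set a \<subseteq> carrier R \<Longrightarrow> lin_coeff R a i \<in> carrier R"
  by (auto simp: lin_coeff_def)

lemma lin_diff_closed:
  "set a \<subseteq> carrier R \<Longrightarrow> set b \<subseteq> carrier R \<Longrightarrow> set (lin_diff R a b) \<subseteq> carrier R"
  by (auto simp: lin_diff_def lin_coeff_closed)

lemma lin_diff_zero_imp_eq:
  assumes "set a \<subseteq> carrier R" and "set b \<subseteq> carrier R" and "length a = length b"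
    and "lin_is_zero R (lin_diff R a b)"
  shows "a = b"
proof (rule nth_equalityI)
  fix i assume "i < length a"
  then have "a ! i \<ominus> b ! i = \<zero>"
    using assms(3,4) nth_lin_diff[of i a b R] by (auto simp: lin_is_zero_def lin_coeff_def)
  then show "a ! i = b ! i" using assms \<open>i < length a\<close> by (simp add: nth_mem subsetD)
qed (fact assms(3))

text \<open>Subtracting from a polynomial of q-degree k one of lower q-degree leaves the
  coefficient of index k untouched.\<close>

lemma lin_diff_lower_qdeg:
  assumes f: "set f \<subseteq> carrier R" and f_nz: "\<not> lin_is_zero R f" and f_deg: "lin_qdeg R f = k"
    and v_deg: "lin_is_zero R v \<or> lin_qdeg R v < k"
  shows "\<not> lin_is_zero R (lin_diff R f v)" and "lin_qdeg R (lin_diff R f v) \<le> k"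
proof -
  let ?h = "lin_diff R f v"
  have k_len: "k < length f" and f_k: "f ! k \<noteq> \<zero>"
    using lin_qdeg_in_support[OF f_nz] f_deg by auto
  have f_above: "lin_coeff R f i = \<zero>" if "k < i" for i
    using nth_gt_lin_qdeg[of R f i] that f_deg by (auto simp: lin_coeff_def)
  have v_above: "lin_coeff R v i = \<zero>" if "k \<le> i" for i
    using v_deg nth_gt_lin_qdeg[of R v i] that by (auto simp: lin_coeff_def lin_is_zero_def)
  have "?h ! k = f ! k"
    using k_len v_above[of k] f by (simp add: lin_coeff_def a_minus_def subsetD)
  then show h_nz: "\<not> lin_is_zero R ?h"
    using k_len f_k unfolding lin_is_zero_def by (metis length_lin_diff max.strict_coboundedI1)
  show "lin_qdeg R ?h \<le> k"
  proof (rule ccontr)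
    assume "\<not> lin_qdeg R ?h \<le> k"
    then have "?h ! lin_qdeg R ?h = \<zero>"
      using lin_qdeg_in_support(1)[OF h_nz] f_above v_above by (simp add: a_minus_def)
    then show False using lin_qdeg_in_support(2)[OF h_nz] by simp
  qed
qed

end

context cring
begin

lemma lin_eval_closed: "set a \<subseteq> carrier R \<Longrightarrow> x \<in> carrier R \<Longrightarrow> lin_eval R q a x \<in> carrier R"
  unfolding lin_eval_def by (rule finsum_closed) auto

lemma lin_eval_lin_coeff:
  assumes a: "set a \<subseteq> carrier R" and x: "x \<in> carrier R" and N: "length a \<le> N"
  shows "lin_eval R q a x = (\<Oplus>i\<in>{..<N}. lin_coeff R a i \<otimes> x [^] (q ^ i))"
proof -
  have split: "{..<N} = {..<length a} \<union> {length a..<N}" using N by auto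
  have "(\<Oplus>i\<in>{length a..<N}. lin_coeff R a i \<otimes> x [^] (q ^ i)) = \<zero>"
    by (rule trans[OF finsum_cong' finsum_zero]) (use x in \<open>auto simp: lin_coeff_def\<close>)
  moreover have "(\<Oplus>i\<in>{..<length a}. lin_coeff R a i \<otimes> x [^] (q ^ i)) = lin_eval R q a x"
    unfolding lin_eval_def by (rule finsum_cong') (use a x in \<open>auto simp: lin_coeff_def\<close>)
  ultimately show ?thesis
    unfolding split using a x lin_eval_closed[OF a x]
    by (subst finsum_Un_disjoint) (auto simp: lin_coeff_closed)
qed

lemma lin_eval_lin_diff:
  assumes a: "set a \<subseteq> carrier R" and b: "set b \<subseteq> carrier R" and x: "x \<in> carrier R"
  shows "lin_eval R q (lin_diff R a b) x = lin_eval R q a x \<ominus> lin_eval R q b x"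
proof -
  define N where "N = max (length a) (length b)"
  note closed = lin_coeff_closed[OF a] lin_coeff_closed[OF b] x
  have "lin_eval R q a x = (\<Oplus>i\<in>{..<N}. lin_coeff R a i \<otimes> x [^] (q ^ i))"
    using lin_eval_lin_coeff[OF a x] N_def by simp
  also have "\<dots> = (\<Oplus>i\<in>{..<N}. lin_coeff R (lin_diff R a b) i \<otimes> x [^] (q ^ i)
                                 \<oplus> lin_coeff R b i \<otimes> x [^] (q ^ i))"
    using closed
    by (intro finsum_cong') (auto simp: N_def lin_coeff_def[of _ "lin_diff R a b"]
        a_minus_def a_assoc l_distr[symmetric] l_neg)
  also have "\<dots> = lin_eval R q (lin_diff R a b) x \<oplus> lin_eval R q b x"
    using closed lin_coeff_closed[OF lin_diff_closed[OF a b]]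
    by (simp add: finsum_addf lin_eval_lin_coeff[OF lin_diff_closed[OF a b] x, of N]
        lin_eval_lin_coeff[OF b x, of N] N_def)
  finally show ?thesis
    using lin_eval_closed[OF lin_diff_closed[OF a b] x] lin_eval_closed[OF b x]
    by (simp add: a_minus_def a_assoc r_neg)
qed

end

lemma (in UP_cring) evalRR_finsum:
  assumes x: "x \<in> carrier R" and "finite A" and "f \<in> A \<rightarrow> carrier P"
  shows "UnivPoly.eval R R id x (finsum P f A) = (\<Oplus>i\<in>A. UnivPoly.eval R R id x (f i))"
  using assms(2,3)
proof (induction A rule: finite_induct)
  case empty
  then show ?case using evalRR_monom[of \<zero> x 0] x by (simp add: id_def)
next
  case (insert i A)
  then have f: "f i \<in> carrier P" "f \<in> A \<rightarrow> carrier P" by auto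
  then have "UnivPoly.eval R R id x (finsum P f (insert i A))
      = UnivPoly.eval R R id x (f i) \<oplus> UnivPoly.eval R R id x (finsum P f A)"
    using insert x by (simp add: P.finsum_insert evalRR_add)
  with insert f x show ?case
    using carrier_evalRR[unfolded id_def] by (subst R.finsum_insert) (auto simp: Pi_def id_def)
qed

definition lin_UP :: "('a, 'b) ring_scheme \<Rightarrow> nat \<Rightarrow> 'a list \<Rightarrow> nat \<Rightarrow> 'a" where
  "lin_UP R q a = (\<Oplus>\<^bsub>UP R\<^esub> i\<in>{..<length a}. UnivPoly.monom (UP R) (a ! i) (q ^ i))"

context UP_cring
begin

lemma lin_UP_closed: "set a \<subseteq> carrier R \<Longrightarrow> lin_UP R q a \<in> carrier P"
  unfolding lin_UP_def P_def[symmetric] by (rule P.finsum_closed) auto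

lemma coeff_lin_UP:
  assumes a: "set a \<subseteq> carrier R"
  shows "UnivPoly.coeff P (lin_UP R q a) n = (\<Oplus>i\<in>{..<length a}. if q ^ i = n then a ! i else \<zero>)"
proof -
  have "UnivPoly.coeff P (lin_UP R q a) n
      = (\<Oplus>i\<in>{..<length a}. UnivPoly.coeff P (UnivPoly.monom P (a ! i) (q ^ i)) n)"
    unfolding lin_UP_def P_def[symmetric] by (rule coeff_finsum) (use a in auto)
  also have "\<dots> = (\<Oplus>i\<in>{..<length a}. if q ^ i = n then a ! i else \<zero>)"
    by (rule R.finsum_cong') (use a in auto)
  finally show ?thesis .
qed

lemma coeff_lin_UP_q_power:
  assumes q: "2 \<le> q" and a: "set a \<subseteq> carrier R" and "j < length a"
  shows "UnivPoly.coeff P (lin_UP R q a) (q ^ j) = a ! j"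
proof -
  have "UnivPoly.coeff P (lin_UP R q a) (q ^ j) = (\<Oplus>i\<in>{..<length a}. if j = i then a ! i else \<zero>)"
    unfolding coeff_lin_UP[OF a]
    by (rule R.finsum_cong') (use a q in \<open>auto simp: power_inject_exp\<close>)
  also have "\<dots> = a ! j" by (rule R.finsum_singleton) (use assms in auto)
  finally show ?thesis .
qed

lemma deg_lin_UP_le:
  assumes q: "2 \<le> q" and a: "set a \<subseteq> carrier R"
  shows "UnivPoly.deg R (lin_UP R q a) \<le> q ^ lin_qdeg R a"
proof (rule deg_aboveI)
  fix m assume m: "q ^ lin_qdeg R a < m"
  have "UnivPoly.coeff P (lin_UP R q a) m = (\<Oplus>i\<in>{..<length a}. \<zero>)"
    unfolding coeff_lin_UP[OF a]
  proof (rule R.finsum_cong')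
    fix i assume "i \<in> {..<length a}"
    moreover have "q ^ i = m \<Longrightarrow> lin_qdeg R a < i"
      using m q by (auto simp: power_strict_increasing_iff)
    ultimately show "(if q ^ i = m then a ! i else \<zero>) = \<zero>"
      using nth_gt_lin_qdeg[of R a i] by auto
  qed auto
  then show "UnivPoly.coeff P (lin_UP R q a) m = \<zero>" by simp
qed (rule lin_UP_closed[OF a])

lemma eval_lin_UP:
  assumes a: "set a \<subseteq> carrier R" and x: "x \<in> carrier R"
  shows "UnivPoly.eval R R id x (lin_UP R q a) = lin_eval R q a x"
proof -
  have "UnivPoly.eval R R id x (lin_UP R q a)
      = (\<Oplus>i\<in>{..<length a}. UnivPoly.eval R R id x (UnivPoly.monom P (a ! i) (q ^ i)))"
    unfolding lin_UP_def P_def[symmetric] by (rule evalRR_finsum[OF x]) (use a in auto)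
  also have "\<dots> = lin_eval R q a x"
    unfolding lin_eval_def by (rule R.finsum_cong') (use a x in \<open>auto simp: evalRR_monom\<close>)
  finally show ?thesis .
qed

end

locale fq_extension = field R for R :: "('a, 'b) ring_scheme" (structure) +
  fixes K :: "'a set" and q :: nat
  assumes subfield_K: "subfield K R" and finite_carrier: "finite (carrier R)"
    and card_K: "card K = q" and q_prime_power: "\<exists>(p::nat) e. Factorial_Ring.prime p \<and> 0 < e \<and> q = p ^ e"
begin

lemma K_subset_carrier: "K \<subseteq> carrier R"
  using subfieldE(3)[OF subfield_K] .

lemma finite_K: "finite K"
  using finite_subset[OF K_subset_carrier finite_carrier] .

lemma two_le_q: "2 \<le> q"
proof -
  have "{\<zero>, \<one>} \<subseteq> K" using subringE(2,3)[OF subfieldE(1)[OF subfield_K]] by simp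
  moreover have "card {\<zero>, \<one>} = 2" by simp
  ultimately show ?thesis using card_mono[OF finite_K] card_K by metis
qed

lemma add_pow_q_one: "add_pow R q \<one> = \<zero>"
proof -
  interpret K: field "R\<lparr>carrier := K\<rparr>" using subfield_iff(2)[OF subfield_K] .
  have "order (add_monoid (R\<lparr>carrier := K\<rparr>)) = q" using card_K by (simp add: order_def)
  moreover have "add_pow (R\<lparr>carrier := K\<rparr>) n x = add_pow R n x" for n :: nat and x
    by (simp add: add_pow_def nat_pow_def)
  ultimately show ?thesis
    using K.add.pow_order_eq_1[of \<one>] subringE(3)[OF subfieldE(1)[OF subfield_K]] by simp
qed

lemma frobenius_q_power:
  assumes "a \<in> carrier R" and "b \<in> carrier R"
  shows "(a \<oplus> b) [^] (q ^ i) = a [^] (q ^ i) \<oplus> b [^] (q ^ i)"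
proof -
  obtain p e where p: "Factorial_Ring.prime p" and "0 < e" and q: "q = p ^ e"
    using q_prime_power by blast
  have no_nilpotents: "x [^] (j::nat) = \<zero> \<Longrightarrow> x = \<zero>" if "x \<in> carrier R" for x j
    using that by (induction j) (auto simp: integral_iff)
  have "add_pow R p \<one> = \<zero>"
    using no_nilpotents[of "add_pow R p \<one>" e] add_pow_q_one q by (simp add: add_pow_one_power)
  then show ?thesis
    using frobenius_add_power[OF p _ assms, of "e * i"] q by (simp add: power_mult)
qed

lemma subfield_pow_q:
  assumes c: "c \<in> K" shows "c [^] q = c"
proof (cases "c = \<zero>")
  case True then show ?thesis using two_le_q by (simp add: nat_pow_zero)
next
  case False
  interpret K: field "R\<lparr>carrier := K\<rparr>" using subfield_iff(2)[OF subfield_K] .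
  interpret G: group "Multiplicative_Group.mult_of (R\<lparr>carrier := K\<rparr>)" using K.field_mult_group .
  have "order (Multiplicative_Group.mult_of (R\<lparr>carrier := K\<rparr>)) = q - 1"
    using K.order_mult_of finite_K card_K by (simp add: order_def)
  then have "c [^]\<^bsub>Multiplicative_Group.mult_of (R\<lparr>carrier := K\<rparr>)\<^esub> (q - 1) = \<one>"
    using G.pow_order_eq_1[of c] c False by simp
  then have "c [^] (q - 1) = \<one>"
    unfolding Multiplicative_Group.nat_pow_mult_of nat_pow_consistent[symmetric] .
  moreover have "c [^] q = c [^] (q - 1) \<otimes> c"
    using two_le_q by (metis Suc_diff_1 less_le_trans nat_pow_Suc pos2)
  ultimately show ?thesis using c K_subset_carrier by auto
qed

lemma subfield_pow_q_power: "c \<in> K \<Longrightarrow> c [^] (q ^ i) = c"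
proof (induction i)
  case (Suc i)
  then have "c [^] (q ^ Suc i) = (c [^] (q ^ i)) [^] q"
    using K_subset_carrier nat_pow_pow[of c "q ^ i" q] by (simp add: mult.commute subsetD)
  then show ?case using Suc subfield_pow_q by simp
qed (use K_subset_carrier in auto)

lemma lin_eval_add:
  assumes a: "set a \<subseteq> carrier R" and x: "x \<in> carrier R" and y: "y \<in> carrier R"
  shows "lin_eval R q a (x \<oplus> y) = lin_eval R q a x \<oplus> lin_eval R q a y"
proof -
  have "lin_eval R q a (x \<oplus> y) = (\<Oplus>i\<in>{..<length a}. a ! i \<otimes> x [^] (q ^ i) \<oplus> a ! i \<otimes> y [^] (q ^ i))"
    unfolding lin_eval_def
    by (rule finsum_cong') (use a x y in \<open>auto simp: frobenius_q_power r_distr\<close>)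
  also have "\<dots> = lin_eval R q a x \<oplus> lin_eval R q a y"
    unfolding lin_eval_def by (rule finsum_addf) (use a x y in auto)
  finally show ?thesis .
qed

lemma lin_eval_smult:
  assumes a: "set a \<subseteq> carrier R" and x: "x \<in> carrier R" and c: "c \<in> K"
  shows "lin_eval R q a (c \<otimes> x) = c \<otimes> lin_eval R q a x"
proof -
  have c': "c \<in> carrier R" using c K_subset_carrier by auto
  have "lin_eval R q a (c \<otimes> x) = (\<Oplus>i\<in>{..<length a}. c \<otimes> (a ! i \<otimes> x [^] (q ^ i)))"
    unfolding lin_eval_def
  proof (rule finsum_cong')
    fix i assume "i \<in> {..<length a}"
    then show "a ! i \<otimes> (c \<otimes> x) [^] q ^ i = c \<otimes> (a ! i \<otimes> x [^] q ^ i)"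
      using a c' x subfield_pow_q_power[OF c] by (simp add: pow_mult_distrib m_comm m_lcomm)
  qed (use a x c' in auto)
  also have "\<dots> = c \<otimes> lin_eval R q a x"
    unfolding lin_eval_def by (rule finsum_rdistr[symmetric]) (use a x c' in auto)
  finally show ?thesis .
qed

lemma lin_eval_zero: "set a \<subseteq> carrier R \<Longrightarrow> lin_eval R q a \<zero> = \<zero>"
  unfolding lin_eval_def
  by (rule trans[OF finsum_cong' finsum_zero]) (use two_le_q in \<open>auto simp: nat_pow_zero\<close>)

lemma lin_eval_minus:
  assumes a: "set a \<subseteq> carrier R" and x: "x \<in> carrier R" and y: "y \<in> carrier R"
  shows "lin_eval R q a (x \<ominus> y) = lin_eval R q a x \<ominus> lin_eval R q a y"
proof -
  have "lin_eval R q a x = lin_eval R q a (x \<ominus> y) \<oplus> lin_eval R q a y"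
    using lin_eval_add[OF a, of "x \<ominus> y" y] x y by (simp add: a_minus_def a_assoc l_neg)
  then show ?thesis
    using lin_eval_closed[OF a] x y by (simp add: a_minus_def a_assoc r_neg)
qed

lemma lin_eval_combine:
  assumes a: "set a \<subseteq> carrier R"
  shows "set Ks \<subseteq> K \<Longrightarrow> set Us \<subseteq> carrier R \<Longrightarrow>
     lin_eval R q a (combine Ks Us) = combine Ks (map (lin_eval R q a) Us)"
proof (induction Ks Us rule: combine.induct)
  case (1 k Ks u Us)
  then have "k \<in> carrier R" "set Ks \<subseteq> carrier R" using K_subset_carrier by auto
  with 1 show ?case by (simp add: lin_eval_add lin_eval_smult a)
qed (simp_all add: lin_eval_zero a)

lemma lin_eval_image_Span:
  assumes a: "set a \<subseteq> carrier R" and U: "set Us \<subseteq> carrier R"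
  shows "lin_eval R q a ` Span K Us = Span K (map (lin_eval R q a) Us)"
proof -
  have U': "set (map (lin_eval R q a) Us) \<subseteq> carrier R" using U a lin_eval_closed by auto
  show ?thesis
    unfolding Span_eq_combine_set_length_version[OF subfield_K U]
      Span_eq_combine_set_length_version[OF subfield_K U']
    using lin_eval_combine[OF a _ U] by force
qed

lemma power_q_le_imp_le: "q ^ i \<le> q ^ j \<Longrightarrow> i \<le> j"
  using two_le_q by (simp add: power_le_imp_le_exp)

lemma card_lin_roots_le:
  assumes a: "set a \<subseteq> carrier R" and a_nz: "\<not> lin_is_zero R a"
  shows "card {x \<in> carrier R. lin_eval R q a x = \<zero>} \<le> q ^ lin_qdeg R a"
proof -
  interpret UP: UP_domain R "UP R" by unfold_locales
  have "lin_UP R q a \<noteq> \<zero>\<^bsub>UP R\<^esub>"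
    using UP.coeff_lin_UP_q_power[OF two_le_q a lin_qdeg_in_support(1)[OF a_nz]] lin_qdeg_in_support(2)[OF a_nz]
    by auto
  then have "card {x \<in> carrier R. UnivPoly.eval R R id x (lin_UP R q a) = \<zero>} \<le> UnivPoly.deg R (lin_UP R q a)"
    using UP.roots_bound[OF UP.lin_UP_closed[OF a] _ finite_carrier] by blast
  moreover have "{x \<in> carrier R. UnivPoly.eval R R id x (lin_UP R q a) = \<zero>}
      = {x \<in> carrier R. lin_eval R q a x = \<zero>}"
    using UP.eval_lin_UP[OF a] by auto
  ultimately show ?thesis using UP.deg_lin_UP_le[OF two_le_q a] by simp
qed

lemma Span_eq_image_combine:
  assumes "set Us \<subseteq> carrier R"
  shows "Span K Us = (\<lambda>Ks. combine Ks Us) ` {Ks. set Ks \<subseteq> K \<and> length Ks = length Us}"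
  unfolding Span_eq_combine_set_length_version[OF subfield_K assms] by auto

lemma finite_Span: "set Us \<subseteq> carrier R \<Longrightarrow> finite (Span K Us)"
  using finite_subset[OF Span_in_carrier[OF K_subset_carrier] finite_carrier] by blast

lemma card_Span_le:
  assumes "set Us \<subseteq> carrier R" shows "card (Span K Us) \<le> q ^ length Us"
proof -
  have "card (Span K Us) \<le> card {Ks. set Ks \<subseteq> K \<and> length Ks = length Us}"
    unfolding Span_eq_image_combine[OF assms]
    by (rule card_image_le) (simp add: finite_lists_length_eq finite_K)
  then show ?thesis using card_lists_length_eq[OF finite_K] card_K by simp
qed

lemma card_Span_independent:
  assumes I: "independent K Us"
  shows "card (Span K Us) = q ^ length Us"
proof -
  have U: "set Us \<subseteq> carrier R" using independent_in_carrier[OF I] .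
  have "inj_on (\<lambda>Ks. combine Ks Us) {Ks. set Ks \<subseteq> K \<and> length Ks = length Us}"
  proof (rule inj_onI)
    fix Ks Ks' assume Ks: "Ks \<in> {Ks. set Ks \<subseteq> K \<and> length Ks = length Us}"
      and "Ks' \<in> {Ks. set Ks \<subseteq> K \<and> length Ks = length Us}" and "combine Ks Us = combine Ks' Us"
    moreover have "combine Ks Us \<in> Span K Us" using Ks unfolding Span_eq_image_combine[OF U] by auto
    note unique_decomposition[OF subfield_K I this]
    ultimately show "Ks = Ks'" by auto
  qed
  then have "card (Span K Us) = card {Ks. set Ks \<subseteq> K \<and> length Ks = length Us}"
    unfolding Span_eq_image_combine[OF U] by (rule card_image)
  then show ?thesis using card_lists_length_eq[OF finite_K] card_K by simp
qed

lemma card_Span_eq_power_rank_weight: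
  assumes U: "set Us \<subseteq> carrier R"
  shows "card (Span K Us) = q ^ rank_weight R K Us"
proof -
  have "dimension (rank_weight R K Us) K (Span K Us)"
    using finite_dimensionE[OF subfield_K Span_finite_dimension[OF subfield_K U]]
    by (simp add: rank_weight_def over_def)
  then obtain Vs where "independent K Vs" "length Vs = rank_weight R K Us" "Span K Vs = Span K Us"
    using exists_base[OF subfield_K] by blast
  then show ?thesis using card_Span_independent by metis
qed

lemma rank_weight_le_length: "set Us \<subseteq> carrier R \<Longrightarrow> rank_weight R K Us \<le> length Us"
  using card_Span_eq_power_rank_weight card_Span_le power_q_le_imp_le by metis

lemma rank_weight_mono:
  assumes U: "set Us \<subseteq> carrier R" and V: "set Vs \<subseteq> carrier R" and "Span K Us \<subseteq> Span K Vs"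
  shows "rank_weight R K Us \<le> rank_weight R K Vs"
  using card_mono[OF finite_Span[OF V] assms(3)] power_q_le_imp_le
  unfolding card_Span_eq_power_rank_weight[OF U] card_Span_eq_power_rank_weight[OF V] by blast

lemma length_le_lin_qdeg_if_vanishes:
  assumes h: "set h \<subseteq> carrier R" and h_nz: "\<not> lin_is_zero R h" and I: "independent K Us"
    and vanish: "\<And>u. u \<in> set Us \<Longrightarrow> lin_eval R q h u = \<zero>"
  shows "length Us \<le> lin_qdeg R h"
proof -
  have U: "set Us \<subseteq> carrier R" using independent_in_carrier[OF I] .
  have "Span K Us \<subseteq> {x \<in> carrier R. lin_eval R q h x = \<zero>}"
  proof
    fix y assume y: "y \<in> Span K Us"
    then obtain Ks where Ks: "set Ks \<subseteq> K" "length Ks = length Us" "y = combine Ks Us"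
      using Span_mem_iff_length_version[OF subfield_K U] by blast
    have "lin_eval R q h y = combine Ks (map (\<lambda>_. \<zero>) Us)"
      using lin_eval_combine[OF h Ks(1) U] Ks(3) vanish by (simp cong: map_cong)
    also have "\<dots> = \<zero>"
      using Ks(1) K_subset_carrier
    proof (induction Ks arbitrary: Us)
      case (Cons k Ks) then show ?case by (cases Us) auto
    qed simp
    finally show "y \<in> {x \<in> carrier R. lin_eval R q h x = \<zero>}"
      using y Span_in_carrier[OF K_subset_carrier U] by auto
  qed
  then have "card (Span K Us) \<le> card {x \<in> carrier R. lin_eval R q h x = \<zero>}"
    by (rule card_mono[rotated]) (simp add: finite_carrier)
  then show ?thesis
    using card_Span_independent[OF I] card_lin_roots_le[OF h h_nz] power_q_le_imp_le by force
qed

text \<open>Rank--nullity for the \<open>K\<close>-linear map \<open>x \<mapsto> h(x)\<close> on the span of \<open>Us\<close>, with the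
  kernel bounded by the root count \<open>q ^ lin_qdeg R h\<close>.\<close>

lemma length_le_rank_weight_add_lin_qdeg:
  assumes h: "set h \<subseteq> carrier R" and h_nz: "\<not> lin_is_zero R h" and I: "independent K Us"
  shows "length Us \<le> rank_weight R K (map (lin_eval R q h) Us) + lin_qdeg R h"
proof -
  have U: "set Us \<subseteq> carrier R" using independent_in_carrier[OF I] .
  let ?V = "Span K Us" and ?h = "lin_eval R q h"
  have V: "x \<in> carrier R" if "x \<in> ?V" for x
    using that Span_in_carrier[OF K_subset_carrier U] by blast
  have fibre: "card {x \<in> ?V. ?h x = ?h x0} \<le> q ^ lin_qdeg R h" if x0: "x0 \<in> ?V" for x0
  proof -
    have "inj_on (\<lambda>x. x \<ominus> x0) {x \<in> ?V. ?h x = ?h x0}"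
    proof (rule inj_onI)
      fix x1 x2 assume "x1 \<in> {x \<in> ?V. ?h x = ?h x0}" "x2 \<in> {x \<in> ?V. ?h x = ?h x0}"
        and "x1 \<ominus> x0 = x2 \<ominus> x0"
      then show "x1 = x2" using V x0 add.right_cancel[of "\<ominus> x0" x1 x2] by (simp add: a_minus_def)
    qed
    moreover have "x \<ominus> x0 \<in> {x \<in> carrier R. ?h x = \<zero>}" if "x \<in> ?V" "?h x = ?h x0" for x
    proof -
      have "x \<in> carrier R" "x0 \<in> carrier R" using V that(1) x0 by blast+
      then show ?thesis using lin_eval_minus[OF h] lin_eval_closed[OF h] that(2) by simp
    qed
    then have "(\<lambda>x. x \<ominus> x0) ` {x \<in> ?V. ?h x = ?h x0} \<subseteq> {x \<in> carrier R. ?h x = \<zero>}"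
      by blast
    ultimately have "card {x \<in> ?V. ?h x = ?h x0} \<le> card {x \<in> carrier R. ?h x = \<zero>}"
      by (intro card_inj_on_le) (simp_all add: finite_carrier)
    then show ?thesis using card_lin_roots_le[OF h h_nz] by simp
  qed
  have "q ^ length Us \<le> card (?h ` ?V) * q ^ lin_qdeg R h"
    unfolding card_Span_independent[OF I, symmetric]
    by (rule card_le_card_image_mult[OF finite_Span[OF U]], erule imageE) (simp add: fibre del: Span.simps)
  also have "card (?h ` ?V) = q ^ rank_weight R K (map ?h Us)"
    unfolding lin_eval_image_Span[OF h U]
    by (rule card_Span_eq_power_rank_weight) (use U in \<open>auto intro!: lin_eval_closed[OF h]\<close>)
  finally have "q ^ length Us \<le> q ^ (rank_weight R K (map ?h Us) + lin_qdeg R h)"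
    by (simp add: power_add)
  then show ?thesis by (rule power_q_le_imp_le)
qed

lemma lin_eval_inj_on_independent:
  assumes I: "independent K Us"
    and a: "set a \<subseteq> carrier R" and b: "set b \<subseteq> carrier R"
    and len: "length a = length b" "length a \<le> length Us"
    and eq: "map (lin_eval R q a) Us = map (lin_eval R q b) Us"
  shows "a = b"
proof (rule lin_diff_zero_imp_eq[OF a b len(1)], rule ccontr)
  let ?h = "lin_diff R a b"
  assume h_nz: "\<not> lin_is_zero R ?h"
  have "lin_eval R q ?h u = \<zero>" if u: "u \<in> set Us" for u
  proof -
    have "u \<in> carrier R" using u independent_in_carrier[OF I] by blast
    moreover have "lin_eval R q a u = lin_eval R q b u" using eq u by (simp add: map_eq_conv)
    ultimately show ?thesis using lin_eval_lin_diff[OF a b] lin_eval_closed[OF b] by simp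
  qed
  then have "length Us \<le> lin_qdeg R ?h"
    by (rule length_le_lin_qdeg_if_vanishes[OF lin_diff_closed[OF a b] h_nz I])
  then show False using lin_qdeg_in_support(1)[OF h_nz] len by simp
qed

text \<open>Interpolation follows from injectivity by counting: both sides have
  \<open>card (carrier R) ^ length Us\<close> elements.\<close>

lemma lin_interpolation:
  assumes I: "independent K Us" and ys: "ys \<in> words R (length Us)"
  shows "\<exists>v. set v \<subseteq> carrier R \<and> length v = length Us \<and> map (lin_eval R q v) Us = ys"
proof -
  let ?P = "{v. set v \<subseteq> carrier R \<and> length v = length Us}"
  let ?ev = "\<lambda>v. map (lin_eval R q v) Us"
  have U: "set Us \<subseteq> carrier R" using independent_in_carrier[OF I] .
  have inj: "inj_on ?ev ?P"
    using lin_eval_inj_on_independent[OF I] by (intro inj_onI) auto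
  have words: "words R (length Us) = ?P" by (auto simp: words_def)
  have "?ev ` ?P \<subseteq> ?P" using U by (auto intro!: lin_eval_closed)
  then have "?ev ` ?P = ?P"
    by (rule card_subset_eq[OF finite_lists_length_eq[OF finite_carrier]]) (simp add: card_image[OF inj])
  then have "ys \<in> ?ev ` ?P" using ys unfolding words by simp
  then show ?thesis by auto
qed

lemma rank_weight_le_if_prefix_zero:
  assumes d: "set d \<subseteq> carrier R" and zero: "\<And>i. i < k \<Longrightarrow> d ! i = \<zero>"
  shows "rank_weight R K d \<le> length d - k"
proof -
  have d': "set (drop k d) \<subseteq> carrier R" using d by (meson in_set_dropD subset_iff)
  have "set d \<subseteq> Span K (drop k d)"
  proof
    fix x assume "x \<in> set d"
    then obtain i where i: "i < length d" "x = d ! i" by (auto simp: in_set_conv_nth)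
    show "x \<in> Span K (drop k d)"
    proof (cases "i < k")
      case True
      then show ?thesis using zero i Span_subgroup_props(2)[OF subfield_K d'] by simp
    next
      case False
      then have "x \<in> set (drop k d)" using i by (auto simp: in_set_conv_nth intro!: exI[of _ "i - k"])
      then show ?thesis using Span_base_incl[OF subfield_K d'] by auto
    qed
  qed
  then have "rank_weight R K d \<le> rank_weight R K (drop k d)"
    by (intro rank_weight_mono[OF d d'] mono_Span_subset[OF subfield_K _ d'])
  also have "\<dots> \<le> length d - k" using rank_weight_le_length[OF d'] by simp
  finally show ?thesis .
qed

lemma finite_words: "finite (words R n)"
  unfolding words_def using finite_lists_length_eq[OF finite_carrier] by (simp add: conj_commute)

lemma map_lin_eval_in_words:
  "set f \<subseteq> carrier R \<Longrightarrow> set gs \<subseteq> carrier R \<Longrightarrow> map (lin_eval R q f) gs \<in> words R (length gs)"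
  by (auto simp: words_def intro!: lin_eval_closed)

lemma gabidulin_subset_words: "set gs \<subseteq> carrier R \<Longrightarrow> gabidulin R q k gs \<subseteq> words R (length gs)"
  unfolding gabidulin_def linpolys_def using map_lin_eval_in_words by auto

lemma finite_gabidulin: "set gs \<subseteq> carrier R \<Longrightarrow> finite (gabidulin R q k gs)"
  using finite_subset[OF gabidulin_subset_words finite_words] .

lemma gabidulin_nonempty: "map (lin_eval R q []) gs \<in> gabidulin R q k gs"
  unfolding gabidulin_def linpolys_def by (auto simp: lin_is_zero_def)

lemma rank_dist_map_lin_eval:
  assumes "set f \<subseteq> carrier R" and "set v \<subseteq> carrier R" and "set gs \<subseteq> carrier R"
  shows "rank_dist R K (map (lin_eval R q f) gs) (map (lin_eval R q v) gs)
       = rank_weight R K (map (lin_eval R q (lin_diff R f v)) gs)"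
proof -
  have "map2 (\<lambda>x y. x \<ominus> y) (map (lin_eval R q f) gs) (map (lin_eval R q v) gs)
      = map (lin_eval R q (lin_diff R f v)) gs"
    using assms lin_eval_lin_diff by (induction gs) auto
  then show ?thesis by (simp add: rank_dist_def)
qed

text \<open>Every word is within rank distance \<open>n - k\<close> of the codeword that interpolates it at
  \<open>g\<^sub>1, \<dots>, g\<^sub>k\<close>.\<close>

lemma exists_gabidulin_codeword_close:
  assumes I: "independent K gs" and k: "k \<le> length gs" and u: "u \<in> words R (length gs)"
  shows "\<exists>c \<in> gabidulin R q k gs. rank_dist R K u c \<le> length gs - k"
proof -
  have U: "set gs \<subseteq> carrier R" using independent_in_carrier[OF I] .
  have I_k: "independent K (take k gs)"
    using independent_split(2)[OF subfield_K, of "take k gs" "drop k gs"] I by simp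
  have len_k: "length (take k gs) = k" using k by simp
  have "take k u \<in> words R (length (take k gs))"
    using u k by (auto simp: words_def dest: in_set_takeD)
  from lin_interpolation[OF I_k this] obtain v where v: "set v \<subseteq> carrier R" "length v = k"
    and interp: "map (lin_eval R q v) (take k gs) = take k u"
    unfolding len_k by blast
  define c where "c = map (lin_eval R q v) gs"
  have "lin_is_zero R v \<or> lin_qdeg R v < k"
    using lin_qdeg_in_support(1)[of R v] v(2) by blast
  then have c: "c \<in> gabidulin R q k gs"
    unfolding gabidulin_def linpolys_def c_def using v(1) by blast
  define d where "d = map2 (\<lambda>x y. x \<ominus> y) u c"
  have u': "length u = length gs" "set u \<subseteq> carrier R" using u by (auto simp: words_def)
  have len_d: "length d = length gs" using u'(1) by (simp add: d_def c_def)
  have nth_d: "d ! i = u ! i \<ominus> lin_eval R q v (gs ! i)" if "i < length gs" for i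
    using that u'(1) by (simp add: d_def c_def)
  have d: "set d \<subseteq> carrier R"
  proof
    fix x assume "x \<in> set d"
    then obtain i where "i < length gs" "x = d ! i" using len_d by (auto simp: in_set_conv_nth)
    then show "x \<in> carrier R" using nth_d u' U v(1) lin_eval_closed by simp
  qed
  have "d ! i = \<zero>" if "i < k" for i
  proof -
    have "lin_eval R q v (gs ! i) = u ! i"
      using arg_cong[OF interp, of "\<lambda>xs. xs ! i"] that len_k by simp
    then show ?thesis using that k u' nth_d by simp
  qed
  then have "rank_dist R K u c \<le> length gs - k"
    using rank_weight_le_if_prefix_zero[OF d] len_d by (simp add: rank_dist_def d_def)
  with c show ?thesis ..
qed

lemma rank_dist_ge_if_lower_qdeg:
  assumes I: "independent K gs"
    and f: "set f \<subseteq> carrier R" and f_nz: "\<not> lin_is_zero R f" and f_deg: "lin_qdeg R f = k"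
    and v: "set v \<subseteq> carrier R" and v_deg: "lin_is_zero R v \<or> lin_qdeg R v < k"
  shows "length gs - k \<le> rank_dist R K (map (lin_eval R q f) gs) (map (lin_eval R q v) gs)"
proof -
  note h = lin_diff_closed[OF f v] lin_diff_lower_qdeg[OF f f_nz f_deg v_deg]
  have "length gs \<le> rank_weight R K (map (lin_eval R q (lin_diff R f v)) gs) + k"
    using length_le_rank_weight_add_lin_qdeg[OF h(1,2) I] h(3) by linarith
  then show ?thesis
    using rank_dist_map_lin_eval[OF f v independent_in_carrier[OF I]] by simp
qed

lemma dist_to_code_gabidulin_le:
  assumes I: "independent K gs" and k: "k \<le> length gs" and u: "u \<in> words R (length gs)"
  shows "dist_to_code R K u (gabidulin R q k gs) \<le> length gs - k"
proof -
  obtain c where c: "c \<in> gabidulin R q k gs" "rank_dist R K u c \<le> length gs - k"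
    using exists_gabidulin_codeword_close[OF I k u] by blast
  have "dist_to_code R K u (gabidulin R q k gs) \<le> rank_dist R K u c"
    unfolding dist_to_code_def
    using finite_gabidulin[OF independent_in_carrier[OF I]] c(1) by (intro Min_le) auto
  with c(2) show ?thesis by linarith
qed

lemma dist_to_code_gabidulin_eq:
  assumes I: "independent K gs" and k: "k \<le> length gs"
    and f: "set f \<subseteq> carrier R" and f_nz: "\<not> lin_is_zero R f" and f_deg: "lin_qdeg R f = k"
  shows "dist_to_code R K (map (lin_eval R q f) gs) (gabidulin R q k gs) = length gs - k"
proof (rule antisym)
  have U: "set gs \<subseteq> carrier R" using independent_in_carrier[OF I] .
  show "dist_to_code R K (map (lin_eval R q f) gs) (gabidulin R q k gs) \<le> length gs - k"
    by (rule dist_to_code_gabidulin_le[OF I k map_lin_eval_in_words[OF f U]])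
  have "dist_to_code R K (map (lin_eval R q f) gs) (gabidulin R q k gs)
      \<in> rank_dist R K (map (lin_eval R q f) gs) ` gabidulin R q k gs"
    unfolding dist_to_code_def using finite_gabidulin[OF U] gabidulin_nonempty by (intro Min_in) auto
  then obtain v where v: "set v \<subseteq> carrier R" "lin_is_zero R v \<or> lin_qdeg R v < k"
    and "dist_to_code R K (map (lin_eval R q f) gs) (gabidulin R q k gs)
       = rank_dist R K (map (lin_eval R q f) gs) (map (lin_eval R q v) gs)"
    unfolding gabidulin_def linpolys_def by blast
  then show "length gs - k \<le> dist_to_code R K (map (lin_eval R q f) gs) (gabidulin R q k gs)"
    using rank_dist_ge_if_lower_qdeg[OF I f f_nz f_deg v] by simp
qed

lemma covering_radius_gabidulin:
  assumes I: "independent K gs" and k: "k \<le> length gs"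
  shows "covering_radius R K (length gs) (gabidulin R q k gs) = length gs - k"
  unfolding covering_radius_def
proof (rule Max_eqI)
  let ?x_qk = "replicate k \<zero> @ [\<one>]"
  have x_qk: "set ?x_qk \<subseteq> carrier R" "length ?x_qk = Suc k" "?x_qk ! k \<noteq> \<zero>"
    by (auto simp: nth_append)
  show "length gs - k \<in> (\<lambda>u. dist_to_code R K u (gabidulin R q k gs)) ` words R (length gs)"
    using dist_to_code_gabidulin_eq[OF I k x_qk(1) lin_qdeg_last[OF x_qk(2,3)]]
      map_lin_eval_in_words[OF x_qk(1) independent_in_carrier[OF I]]
    by (metis image_eqI)
qed (use finite_words dist_to_code_gabidulin_le[OF I k] in auto)

lemma deep_hole_gabidulin:
  assumes I: "independent K gs" and k: "k \<le> length gs"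
    and f: "set f \<subseteq> carrier R" and f_nz: "\<not> lin_is_zero R f" and f_deg: "lin_qdeg R f = k"
  shows "deep_hole R K (length gs) (gabidulin R q k gs) (map (lin_eval R q f) gs)"
  unfolding deep_hole_def
  using map_lin_eval_in_words[OF f independent_in_carrier[OF I]]
    dist_to_code_gabidulin_eq[OF assms] covering_radius_gabidulin[OF I k] by simp

text \<open>Only polynomials given by exactly \<open>k + 1\<close> coefficients are counted: on these,
  evaluation at the \<open>n > k\<close> independent points is injective.\<close>

lemma card_deep_holes_gabidulin_ge:
  assumes I: "independent K gs" and k: "k < length gs"
  shows "(card (carrier R) - 1) * card (carrier R) ^ k
       \<le> card {u. deep_hole R K (length gs) (gabidulin R q k gs) u}"
proof -
  let ?S = "{f. set f \<subseteq> carrier R \<and> length f = Suc k \<and> f ! k \<noteq> \<zero>}"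
  let ?ev = "\<lambda>f. map (lin_eval R q f) gs"
  have inj: "inj_on ?ev ?S"
  proof (rule inj_onI)
    fix f g assume "f \<in> ?S" "g \<in> ?S" "?ev f = ?ev g"
    then show "f = g" using k by (auto intro: lin_eval_inj_on_independent[OF I, of f g])
  qed
  have holes: "?ev ` ?S \<subseteq> {u. deep_hole R K (length gs) (gabidulin R q k gs) u}"
  proof (rule image_subsetI)
    fix f assume f: "f \<in> ?S"
    then have "\<not> lin_is_zero R f" "lin_qdeg R f = k" using lin_qdeg_last[of f k R] by auto
    then show "?ev f \<in> {u. deep_hole R K (length gs) (gabidulin R q k gs) u}"
      using deep_hole_gabidulin[OF I less_imp_le[OF k]] f by blast
  qed
  have "finite {u. deep_hole R K (length gs) (gabidulin R q k gs) u}"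
    by (rule finite_subset[OF _ finite_words]) (auto simp: deep_hole_def)
  from card_mono[OF this holes] have "card ?S \<le> card {u. deep_hole R K (length gs) (gabidulin R q k gs) u}"
    unfolding card_image[OF inj] .
  then show ?thesis unfolding card_lists_length_Suc_last_neq[OF finite_carrier zero_closed] .
qed

end

theorem corollary1:
  fixes R :: "('a, 'b) ring_scheme" and K :: "'a set"
    and q m n k :: nat and gs :: "'a list"
  assumes "field R" and "subfield K R"
    and "\<exists>(p::nat) e. Factorial_Ring.prime p \<and> 0 < e \<and> q = p ^ e"
    and "card K = q" and "finite (carrier R)" and "card (carrier R) = q ^ m"
    and "1 \<le> k" and "k < n" and "n \<le> m"
    and "length gs = n" and "set gs \<subseteq> carrier R" and "ring.independent R K gs"
  shows "(\<forall>f \<in> linpolys R. \<not> lin_is_zero R f \<and> lin_qdeg R f = k \<longrightarrow>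
            deep_hole R K n (gabidulin R q k gs) (map (lin_eval R q f) gs)
          \<and> dist_to_code R K (map (lin_eval R q f) gs) (gabidulin R q k gs) = n - k
          \<and> covering_radius R K n (gabidulin R q k gs) = n - k)
       \<and> (q ^ m - 1) * q ^ (m * k)
           \<le> card {u. deep_hole R K n (gabidulin R q k gs) u}"
proof -
  interpret fq_extension R K q
    by (rule fq_extension.intro[OF assms(1) fq_extension_axioms.intro[OF assms(2,5,4,3)]])
  have I: "independent K gs" and k: "k < length gs" and n: "n = length gs"
    using assms(8,10,12) by simp_all
  show ?thesis
    unfolding n
  proof (intro conjI ballI impI)
    fix f assume "f \<in> linpolys R" and "\<not> lin_is_zero R f \<and> lin_qdeg R f = k"
    then show "deep_hole R K (length gs) (gabidulin R q k gs) (map (lin_eval R q f) gs)"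
      and "dist_to_code R K (map (lin_eval R q f) gs) (gabidulin R q k gs) = length gs - k"
      using deep_hole_gabidulin[OF I less_imp_le[OF k]] dist_to_code_gabidulin_eq[OF I less_imp_le[OF k]]
      by (simp_all add: linpolys_def)
    show "covering_radius R K (length gs) (gabidulin R q k gs) = length gs - k"
      by (rule covering_radius_gabidulin[OF I less_imp_le[OF k]])
  next
    show "(q ^ m - 1) * q ^ (m * k) \<le> card {u. deep_hole R K (length gs) (gabidulin R q k gs) u}"
      using card_deep_holes_gabidulin_ge[OF I k] assms(6) by (simp add: power_mult)
  qed
qed

end
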